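(* Let $\epsilon>0$ and let $A^\epsilon$ be an arbitrary selfadjoint operator in $\mathcal{H}$ with $\overline{W(A^\epsilon)}=[\inf W(A)-\epsilon,\sup W(A)+\epsilon]$. Define \[ T^\epsilon(\omega):=A^\epsilon-\omega^2-\frac{\omega^2}{c-id\omega-\omega^2}B,\quad \mathop{\rm dom} T^\epsilon(\omega)=\mathop{\rm dom} A^\epsilon,\quad \omega\in\mathcal{C}, \] and let $W_\Omega(T^\epsilon)$ be the enclosure of the numerical range of $T^\epsilon$ defined in the same way as $W_\Omega(T)$, i.e. with $\Omega$ replaced by $\overline{W(A^\epsilon)}\times\overline{W(B)}$. Then $\overline{W_\Omega^\epsilon(T)}\cap i\mathbb{R}=W_\Omega(T^\epsilon)\cap i\mathbb{R}$.
   Context: Let $\mathcal{H}$ be a Hilbert space, $A$ a selfadjoint operator in $\mathcal{H}$, $B$ a non-zero bounded selfadjoint operator in $\mathcal{H}$, and $c\geq 0$, $d>0$ real constants. Set $\theta:=\sqrt{c-d^2/4}$ (principal square root), $\delta_\pm:=\pm\theta-id/2$, $\mathcal{C}:=\mathbb{C}\setminus\{\delta_+,\delta_-\}$, and \[ T(\omega):=A-\omega^2-\frac{\omega^2}{c-id\omega-\omega^2}B,\quad \mathop{\rm dom} T(\omega)=\mathop{\rm dom} A,\quad \omega\in\mathcal{C}. \] $W(\cdot)$ denotes the numerical range of an operator. For $(\alpha,\beta)\in\mathbb{R}^2$ let $t_{(\alpha,\beta)}(\omega):=\alpha-\omega^2-\frac{\omega^2}{c-id\omega-\omega^2}\beta$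 and $p_{(\alpha,\beta)}(\omega):=(\alpha-\omega^2)(c-id\omega-\omega^2)-\beta\omega^2$, with roots $r_n(\alpha,\beta)$, $n=1,\dots,4$, ordered continuously in $(\alpha,\beta)$ and extended to $\alpha=\pm\infty$ by their limit values in $\overline{\mathbb{C}}=\mathbb{C}\cup\{\infty\}$. Let $\Omega:=\overline{W(A)}\times\overline{W(B)}\subset\overline{\mathbb{R}}\times\mathbb{R}$ and $W_\Omega(T):=\bigcup_{n=1}^4\bigcup_{(\alpha,\beta)\in\Omega}r_n(\alpha,\beta)$, an enclosure of the numerical range of $T$. For $\epsilon>0$ define the enclosure of the $\epsilon$-pseudonumerical range \[ W_\Omega^\epsilon(T):=W_\Omega(T)\cup\{\omega\in\mathcal{C}\setminus W_\Omega(T):\exists(\alpha,\beta)\in\Omega,\ |t_{(\alpha,\beta)}(\omega)|<\epsilon\}. \] *)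

theory Defs
  imports "HOL-Analysis.Analysis"
begin

class complex_vector = real_vector +
  fixes scaleC :: "complex \<Rightarrow> 'a \<Rightarrow> 'a"
  assumes scaleC_add_right: "scaleC a (x + y) = scaleC a x + scaleC a y"
    and scaleC_add_left: "scaleC (a + b) x = scaleC a x + scaleC b x"
    and scaleC_scaleC: "scaleC a (scaleC b x) = scaleC (a * b) x"
    and scaleC_one: "scaleC 1 x = x"
    and scaleR_scaleC: "scaleR r x = scaleC (complex_of_real r) x"

class complex_inner = complex_vector + real_normed_vector +
  fixes cinner :: "'a \<Rightarrow> 'a \<Rightarrow> complex"
  assumes cinner_conj: "cinner x y = cnj (cinner y x)"
    and cinner_add_left: "cinner (x + y) z = cinner x z + cinner y z"
    and cinner_scaleC_left: "cinner (scaleC r x) y = cnj r * cinner x y"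
    and cinner_real_nonneg: "Im (cinner x x) = 0 \<and> Re (cinner x x) \<ge> 0"
    and cinner_eq_zero_iff: "cinner x x = 0 \<longleftrightarrow> x = 0"
    and norm_eq_sqrt_cinner: "norm x = sqrt (Re (cinner x x))"

class chilbert_space = complex_inner + complete_space

definition csubspace :: "'a::complex_vector set \<Rightarrow> bool" where
  "csubspace S \<longleftrightarrow> 0 \<in> S \<and> (\<forall>x\<in>S. \<forall>y\<in>S. x + y \<in> S) \<and> (\<forall>c. \<forall>x\<in>S. scaleC c x \<in> S)"

definition clinear_on :: "'a::complex_vector set \<Rightarrow> ('a \<Rightarrow> 'a) \<Rightarrow> bool" where
  "clinear_on D A \<longleftrightarrow> csubspace D \<and>
     (\<forall>x\<in>D. \<forall>y\<in>D. A (x + y) = A x + A y) \<and> (\<forall>c. \<forall>x\<in>D. A (scaleC c x) = scaleC c (A x))"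

definition adjoint_dom :: "'a::complex_inner set \<Rightarrow> ('a \<Rightarrow> 'a) \<Rightarrow> 'a set" where
  "adjoint_dom D A = {y. \<exists>z. \<forall>x\<in>D. cinner (A x) y = cinner x z}"

text \<open>Selfadjoint: densely defined, linear, symmetric, and dom A* contained in dom A
  (hence A* = A).\<close>
definition selfadjoint :: "'a::complex_inner set \<Rightarrow> ('a \<Rightarrow> 'a) \<Rightarrow> bool" where
  "selfadjoint D A \<longleftrightarrow> clinear_on D A \<and> closure D = UNIV \<and>
     (\<forall>x\<in>D. \<forall>y\<in>D. cinner (A x) y = cinner x (A y)) \<and> adjoint_dom D A \<subseteq> D"

definition bounded_op :: "('a::complex_inner \<Rightarrow> 'a) \<Rightarrow> bool" where
  "bounded_op B \<longleftrightarrow> (\<exists>K. \<forall>x. norm (B x) \<le> K * norm x)"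

definition numrange :: "'a::complex_inner set \<Rightarrow> ('a \<Rightarrow> 'a) \<Rightarrow> complex set" where
  "numrange D A = {cinner x (A x) | x. x \<in> D \<and> norm x = 1}"

definition numrange_cl_ext :: "'a::complex_inner set \<Rightarrow> ('a \<Rightarrow> 'a) \<Rightarrow> ereal set" where
  "numrange_cl_ext D A = closure (ereal ` Re ` numrange D A)"

definition numrange_cl_real :: "('a::complex_inner \<Rightarrow> 'a) \<Rightarrow> real set" where
  "numrange_cl_real B = {\<beta>. complex_of_real \<beta> \<in> closure (numrange UNIV B)}"

definition theta :: "real \<Rightarrow> real \<Rightarrow> complex" where
  "theta c d = csqrt (complex_of_real (c - d\<^sup>2 / 4))"

definition delta_p :: "real \<Rightarrow> real \<Rightarrow> complex" where
  "delta_p c d = theta c d - \<i> * complex_of_real (d / 2)"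

definition delta_m :: "real \<Rightarrow> real \<Rightarrow> complex" where
  "delta_m c d = - theta c d - \<i> * complex_of_real (d / 2)"

definition calC :: "real \<Rightarrow> real \<Rightarrow> complex set" where
  "calC c d = UNIV - {delta_p c d, delta_m c d}"

definition t_fun :: "real \<Rightarrow> real \<Rightarrow> real \<Rightarrow> real \<Rightarrow> complex \<Rightarrow> complex" where
  "t_fun c d \<alpha> \<beta> \<omega> = complex_of_real \<alpha> - \<omega>\<^sup>2
     - \<omega>\<^sup>2 / (complex_of_real c - \<i> * complex_of_real d * \<omega> - \<omega>\<^sup>2) * complex_of_real \<beta>"

definition p_fun :: "real \<Rightarrow> real \<Rightarrow> real \<Rightarrow> real \<Rightarrow> complex \<Rightarrow> complex" where
  "p_fun c d \<alpha> \<beta> \<omega> = (complex_of_real \<alpha> - \<omega>\<^sup>2) * (complex_of_real c - \<i> * complex_of_real d * \<omega> - \<omega>\<^sup>2)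
     - complex_of_real \<beta> * \<omega>\<^sup>2"

text \<open>The finite values r_n(a,beta), n=1..4. For finite a these are the roots of p_(a,beta);
  for a = +/-infinity they are the (finite) limit values of the root branches as alpha tends
  to a, i.e. the limits of roots of p_(alpha_k,beta) along sequences alpha_k tending to a.
  The value infinity in the extended complex plane is not recorded.\<close>
definition roots_ext :: "real \<Rightarrow> real \<Rightarrow> ereal \<Rightarrow> real \<Rightarrow> complex set" where
  "roots_ext c d a \<beta> =
     (case a of
        ereal \<alpha> \<Rightarrow> {\<omega>. p_fun c d \<alpha> \<beta> \<omega> = 0}
      | _ \<Rightarrow> {z. \<exists>\<alpha>s \<omega>s. (\<lambda>k. ereal (\<alpha>s k)) \<longlonglongrightarrow> a \<and>
                 (\<forall>k. p_fun c d (\<alpha>s k) \<beta> (\<omega>s k) = 0) \<and> \<omega>s \<longlonglongrightarrow> z})"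

text \<open>W_Omega(T) intersected with the complex plane.\<close>
definition W_Omega :: "real \<Rightarrow> real \<Rightarrow> (ereal \<times> real) set \<Rightarrow> complex set" where
  "W_Omega c d \<Omega> = (\<Union>(a, \<beta>)\<in>\<Omega>. roots_ext c d a \<beta>)"

text \<open>Enclosure of the epsilon-pseudonumerical range; t_(alpha,beta) is only meaningful
  for finite alpha.\<close>
definition W_Omega_eps :: "real \<Rightarrow> real \<Rightarrow> (ereal \<times> real) set \<Rightarrow> real \<Rightarrow> complex set" where
  "W_Omega_eps c d \<Omega> \<epsilon> = W_Omega c d \<Omega> \<union>
     {\<omega> \<in> calC c d - W_Omega c d \<Omega>. \<exists>\<alpha> \<beta>. (ereal \<alpha>, \<beta>) \<in> \<Omega> \<and> norm (t_fun c d \<alpha> \<beta> \<omega>) < \<epsilon>}"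

end

(*
  Write q(omega) = c - i d omega - omega^2, so that p_(alpha,beta) = alpha q - omega^2 (q + beta)
  and t_(alpha,beta) = p_(alpha,beta) / q away from the zeros delta_+, delta_- of q.

  Points of the epsilon-enclosure satisfy |p_(alpha,beta)(omega)| <= epsilon |q(omega)| for some
  (alpha,beta) in Omega, except root values at alpha = +/-infinity, and these are exactly
  delta_+ and delta_-. The relaxed set, together with delta_+/- when W(A) is unbounded, is closed:
  away from the zeros of q the inequality bounds alpha, so limits can be taken along convergent
  subsequences of the parameters. On the imaginary axis p and q are real, so the inequality says
  that omega is a root of p_(alpha - tau, beta) with |tau| <= epsilon, i.e. a root for a parameter
  in the closure of W(A^epsilon).

  Conversely, a root of p_(alpha',beta) with alpha' in the closure of W(A^epsilon) has alpha' within
  epsilon of some alpha in the closure of W(A), since W(A) is an interval; the open mapping theorem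
  for t_(0,beta) then gives points arbitrarily close to the root where |t_(alpha,beta)| < epsilon.
*)

theory Submission
  imports Defs "HOL-Complex_Analysis.Conformal_Mappings"
begin

section \<open>Inner products and the numerical range\<close>

lemma cinner_add_right: "cinner x (y + z) = cinner x y + cinner (x::'a::complex_inner) z"
  by (metis cinner_conj cinner_add_left complex_cnj_add)

lemma cinner_scaleC_right: "cinner x (scaleC r y) = r * cinner (x::'a::complex_inner) y"
  by (metis cinner_conj cinner_scaleC_left complex_cnj_mult complex_cnj_cnj)

lemma cinner_scaleR_left: "cinner (scaleR r x) y = of_real r * cinner (x::'a::complex_inner) y"
  by (simp add: scaleR_scaleC cinner_scaleC_left)

lemma cinner_scaleR_right: "cinner x (scaleR r y) = of_real r * cinner (x::'a::complex_inner) y"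
  by (simp add: scaleR_scaleC cinner_scaleC_right)

lemma cinner_minus_left: "cinner (- x) (y::'a::complex_inner) = - cinner x y"
  using cinner_scaleR_left[of "-1" x y] by simp

lemma cinner_minus_right: "cinner x (- y) = - cinner (x::'a::complex_inner) y"
  using cinner_scaleR_right[of x "-1" y] by simp

lemma cinner_diff_left: "cinner (x - z) (y::'a::complex_inner) = cinner x y - cinner z y"
  using cinner_add_left[of x "- z" y] cinner_minus_left[of z y] by simp

lemma power2_norm_eq_cinner: "(norm (x::'a::complex_inner))\<^sup>2 = Re (cinner x x)"
  using norm_eq_sqrt_cinner[of x] cinner_real_nonneg[of x] by simp

lemma Re_cinner_commute: "Re (cinner y x) = Re (cinner x (y::'a::complex_inner))"
  by (subst cinner_conj) simp

lemma abs_Re_cinner_le: "\<bar>Re (cinner x y)\<bar> \<le> norm x * norm (y::'a::complex_inner)"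
proof -
  have plus: "(norm (x + y))\<^sup>2 = (norm x)\<^sup>2 + (norm y)\<^sup>2 + 2 * Re (cinner x y)"
    unfolding power2_norm_eq_cinner
    by (simp add: cinner_add_left cinner_add_right Re_cinner_commute[of y x])
  have minus: "(norm (x - y))\<^sup>2 = (norm x)\<^sup>2 + (norm y)\<^sup>2 - 2 * Re (cinner x y)"
    unfolding power2_norm_eq_cinner
    by (simp add: cinner_diff_left cinner_add_left cinner_add_right Re_cinner_commute[of y x]
        cinner_minus_left cinner_minus_right diff_conv_add_uminus del: add_uminus_conv_diff)
  have "(norm (x + y))\<^sup>2 \<le> (norm x + norm y)\<^sup>2" "(norm (x - y))\<^sup>2 \<le> (norm x + norm y)\<^sup>2"
    by (simp_all add: power_mono norm_triangle_ineq norm_triangle_ineq4)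
  with plus minus show ?thesis by (simp add: power2_eq_square algebra_simps abs_le_iff)
qed

lemma
  assumes "clinear_on D A"
  shows clinear_on_add_mem: "x \<in> D \<Longrightarrow> y \<in> D \<Longrightarrow> x + y \<in> D"
    and clinear_on_scaleR_mem: "x \<in> D \<Longrightarrow> scaleR r x \<in> D"
    and clinear_on_add: "x \<in> D \<Longrightarrow> y \<in> D \<Longrightarrow> A (x + y) = A x + A y"
    and clinear_on_scaleR: "x \<in> D \<Longrightarrow> A (scaleR r x) = scaleR r (A x)"
  using assms unfolding clinear_on_def csubspace_def by (auto simp: scaleR_scaleC)

lemma clinear_on_zero: "clinear_on UNIV A \<Longrightarrow> A 0 = 0"
  using clinear_on_scaleR[of UNIV A 0 0] by simp

lemma exists_unit_Re_cinner_eq_quotient: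
  fixes D :: "'a::complex_inner set"
  assumes lin: "clinear_on D A" and "z \<in> D" "z \<noteq> 0"
  shows "\<exists>u\<in>D. norm u = 1 \<and> Re (cinner u (A u)) = Re (cinner z (A z)) / (norm z)\<^sup>2"
proof -
  define u where "u = scaleR (1 / norm z) z"
  have "Re (cinner u (A u)) = Re (cinner z (A z)) / (norm z)\<^sup>2"
    unfolding u_def using clinear_on_scaleR[OF lin \<open>z \<in> D\<close>]
    by (simp add: cinner_scaleR_left cinner_scaleR_right power2_eq_square)
  moreover have "norm u = 1" "u \<in> D"
    using assms clinear_on_scaleR_mem[OF lin] unfolding u_def by auto
  ultimately show ?thesis by blast
qed

lemma segment_unit_vectors_neq_0:
  fixes x y :: "'a::real_normed_vector"
  assumes "norm x = 1" "norm y = 1" "y \<noteq> - x" "0 \<le> t" "t \<le> 1"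
  shows "scaleR (1 - t) x + scaleR t y \<noteq> 0"
proof
  assume z0: "scaleR (1 - t) x + scaleR t y = 0"
  then have "norm (scaleR (1 - t) x) = norm (scaleR t y)"
    by (metis add.inverse_unique norm_minus_cancel)
  with assms have "t = 1 / 2" by simp
  with z0 have "scaleR (1 / 2) (x + y) = 0" by (simp add: scaleR_add_right)
  with assms(3) show False by (simp add: eq_neg_iff_add_eq_0 add.commute)
qed

lemma exists_unit_Re_cinner_eq:
  fixes D :: "'a::complex_inner set"
  assumes lin: "clinear_on D A" and "x \<in> D" "y \<in> D" "norm x = 1" "norm y = 1"
    and "Re (cinner x (A x)) \<le> v" "v \<le> Re (cinner y (A y))"
  shows "\<exists>u\<in>D. norm u = 1 \<and> Re (cinner u (A u)) = v"
proof (cases "y = - x")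
  case True
  then have "A y = - A x" using clinear_on_scaleR[OF lin \<open>x \<in> D\<close>, of "-1"] by simp
  with True assms show ?thesis by (auto simp: cinner_minus_left cinner_minus_right)
next
  case False
  text \<open>Move along the segment from x to y and normalize; the Rayleigh quotient
    N t / G t is continuous because the segment avoids 0.\<close>
  define z where "z t = scaleR (1 - t) x + scaleR t y" for t
  define m where "m = Re (cinner x (A y)) + Re (cinner y (A x))"
  define N where "N t = (1 - t)\<^sup>2 * Re (cinner x (A x)) + (1 - t) * t * m + t\<^sup>2 * Re (cinner y (A y))" for t
  define G where "G t = (1 - t)\<^sup>2 + (1 - t) * t * (2 * Re (cinner x y)) + t\<^sup>2" for t
  have zD: "z t \<in> D" for t
    unfolding z_def using clinear_on_add_mem[OF lin] clinear_on_scaleR_mem[OF lin] assms by blast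
  have Az: "A (z t) = scaleR (1 - t) (A x) + scaleR t (A y)" for t
    unfolding z_def using clinear_on_add[OF lin] clinear_on_scaleR[OF lin] clinear_on_scaleR_mem[OF lin] assms
    by simp
  have unit: "Re (cinner x x) = 1" "Re (cinner y y) = 1"
    using assms power2_norm_eq_cinner[of x] power2_norm_eq_cinner[of y] by auto
  have N: "Re (cinner (z t) (A (z t))) = N t" for t
    unfolding Az unfolding z_def N_def m_def
    by (simp only: cinner_add_left cinner_add_right cinner_scaleR_left cinner_scaleR_right)
      (simp add: power2_eq_square algebra_simps)
  have G: "(norm (z t))\<^sup>2 = G t" for t
    unfolding power2_norm_eq_cinner z_def G_def using unit Re_cinner_commute[of y x]
    by (simp only: cinner_add_left cinner_add_right cinner_scaleR_left cinner_scaleR_right)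
      (simp add: power2_eq_square algebra_simps)
  have z_nonzero: "z t \<noteq> 0" if "0 \<le> t" "t \<le> 1" for t
    unfolding z_def using segment_unit_vectors_neq_0 False assms that by blast
  have "G t > 0" if "0 \<le> t" "t \<le> 1" for t
    using G[of t] z_nonzero[OF that] by (metis zero_less_norm_iff zero_less_power)
  then have "continuous_on {0..1} (\<lambda>t. N t / G t)"
    unfolding N_def G_def by (intro continuous_intros) (auto simp: less_le)
  moreover have "N 0 / G 0 \<le> v" "v \<le> N 1 / G 1" using assms unfolding N_def G_def by auto
  ultimately obtain t where t: "0 \<le> t" "t \<le> 1" "N t / G t = v"
    using IVT'[of "\<lambda>t. N t / G t" 0 v 1] by auto
  then show ?thesis
    using exists_unit_Re_cinner_eq_quotient[OF lin zD z_nonzero[OF t(1,2)]] N G by simp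
qed

lemma connected_Re_numrange:
  assumes "clinear_on D A"
  shows "connected (Re ` numrange D A)"
proof (rule connectedI_interval)
  fix r1 r2 v assume "r1 \<in> Re ` numrange D A" "r2 \<in> Re ` numrange D A" "r1 \<le> v" "v \<le> r2"
  then obtain x y where "x \<in> D" "norm x = 1" "r1 = Re (cinner x (A x))"
    and "y \<in> D" "norm y = 1" "r2 = Re (cinner y (A y))" "r1 \<le> v" "v \<le> r2"
    unfolding numrange_def by auto
  with exists_unit_Re_cinner_eq[OF assms]
  obtain u where "u \<in> D" "norm u = 1" "Re (cinner u (A u)) = v" by metis
  then show "v \<in> Re ` numrange D A" unfolding numrange_def by force
qed

lemma Re_numrange_nonempty:
  fixes D :: "'a::complex_inner set"
  assumes "selfadjoint D A" and "(x::'a) \<noteq> 0"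
  shows "Re ` numrange D A \<noteq> {}"
proof -
  have "D \<noteq> {0}" "D \<noteq> {}"
    using assms unfolding selfadjoint_def by auto
  then obtain y where "y \<in> D" "y \<noteq> 0" by blast
  moreover have "clinear_on D A" using assms(1) unfolding selfadjoint_def by simp
  ultimately have "scaleR (1 / norm y) y \<in> D" "norm (scaleR (1 / norm y) y) = 1"
    using clinear_on_scaleR_mem by auto
  then show ?thesis unfolding numrange_def by blast
qed

lemma numrange_cl_real_nonempty:
  fixes B :: "'a::complex_inner \<Rightarrow> 'a" and x :: 'a
  assumes "selfadjoint UNIV B" and "x \<noteq> 0"
  shows "numrange_cl_real B \<noteq> {}"
proof -
  define u where "u = scaleR (1 / norm x) x"
  have "norm u = 1" unfolding u_def using assms(2) by simp
  then have "cinner u (B u) \<in> numrange UNIV B" unfolding numrange_def by auto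
  then have "cinner u (B u) \<in> closure (numrange UNIV B)" using closure_subset by blast
  moreover have "cinner u (B u) = cnj (cinner u (B u))"
    using assms(1) cinner_conj[of u "B u"] unfolding selfadjoint_def by simp
  then have "of_real (Re (cinner u (B u))) = cinner u (B u)"
    by (simp add: complex_eq_iff)
  ultimately have "Re (cinner u (B u)) \<in> numrange_cl_real B"
    unfolding numrange_cl_real_def by simp
  then show ?thesis by blast
qed

lemma closed_numrange_cl_real: "closed (numrange_cl_real B)"
proof -
  have "closed (complex_of_real -` closure (numrange UNIV B))"
    by (rule continuous_closed_vimage) (auto intro: continuous_intros)
  then show ?thesis unfolding numrange_cl_real_def vimage_def .
qed

lemma numrange_cl_real_bounded:
  assumes "bounded_op B"
  shows "\<exists>M. \<forall>\<beta>\<in>numrange_cl_real B. \<bar>\<beta>\<bar> \<le> M"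
proof -
  obtain K where K: "\<And>x. norm (B x) \<le> K * norm x" using assms unfolding bounded_op_def by blast
  have "\<bar>Re (cinner y (B y))\<bar> \<le> K" if "norm y = 1" for y
    using abs_Re_cinner_le[of y "B y"] K[of y] that by simp
  then have "numrange UNIV B \<subseteq> {w. \<bar>Re w\<bar> \<le> K}" unfolding numrange_def by auto
  moreover have "closed {w::complex. \<bar>Re w\<bar> \<le> K}" by (intro closed_Collect_le continuous_intros)
  ultimately have "closure (numrange UNIV B) \<subseteq> {w. \<bar>Re w\<bar> \<le> K}" by (rule closure_minimal)
  then show ?thesis unfolding numrange_cl_real_def by (intro exI[of _ K]) auto
qed

section \<open>The scalar quadratic q and the root sets\<close>

definition q_fun :: "real \<Rightarrow> real \<Rightarrow> complex \<Rightarrow> complex" where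
  "q_fun c d \<omega> = complex_of_real c - \<i> * complex_of_real d * \<omega> - \<omega>\<^sup>2"

lemma p_fun_eq: "p_fun c d \<alpha> \<beta> \<omega> = of_real \<alpha> * q_fun c d \<omega> - \<omega>\<^sup>2 * (q_fun c d \<omega> + of_real \<beta>)"
  unfolding p_fun_def q_fun_def by (simp add: algebra_simps)

lemma p_fun_shift: "p_fun c d (\<alpha> - \<tau>) \<beta> \<omega> = p_fun c d \<alpha> \<beta> \<omega> - of_real \<tau> * q_fun c d \<omega>"
  unfolding p_fun_eq by (simp add: algebra_simps)

lemma t_fun_eq: "t_fun c d \<alpha> \<beta> \<omega> = of_real \<alpha> - \<omega>\<^sup>2 - \<omega>\<^sup>2 / q_fun c d \<omega> * of_real \<beta>"
  unfolding t_fun_def q_fun_def ..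

lemma t_fun_shift: "t_fun c d \<alpha> \<beta> \<omega> = of_real \<alpha> + t_fun c d 0 \<beta> \<omega>"
  unfolding t_fun_eq by simp

lemma p_fun_eq_t_fun_mult: "q_fun c d \<omega> \<noteq> 0 \<Longrightarrow> p_fun c d \<alpha> \<beta> \<omega> = t_fun c d \<alpha> \<beta> \<omega> * q_fun c d \<omega>"
  unfolding p_fun_eq t_fun_eq by (simp add: field_simps)

lemma q_fun_eq_0_iff: "q_fun c d \<omega> = 0 \<longleftrightarrow> \<omega> = delta_p c d \<or> \<omega> = delta_m c d"
proof -
  have "(theta c d)\<^sup>2 = complex_of_real (c - d\<^sup>2 / 4)" unfolding theta_def by simp
  then have "q_fun c d \<omega> = - ((\<omega> - delta_p c d) * (\<omega> - delta_m c d))"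
    unfolding q_fun_def delta_p_def delta_m_def by (simp add: algebra_simps power2_eq_square)
  then show ?thesis by simp
qed

lemma calC_iff_q_fun_nonzero: "\<omega> \<in> calC c d \<longleftrightarrow> q_fun c d \<omega> \<noteq> 0"
  unfolding calC_def q_fun_eq_0_iff by auto

lemma continuous_on_q_fun [continuous_intros]: "continuous_on S (q_fun c d)"
  unfolding q_fun_def by (intro continuous_intros)

lemma holomorphic_on_q_fun [holomorphic_intros]: "q_fun c d holomorphic_on S"
  unfolding q_fun_def by (intro holomorphic_intros)

lemma tendsto_q_fun: "w \<longlonglongrightarrow> z \<Longrightarrow> (\<lambda>n. q_fun c d (w n)) \<longlonglongrightarrow> q_fun c d z"
  unfolding q_fun_def by (intro tendsto_intros)

lemma tendsto_p_fun:
  "a \<longlonglongrightarrow> \<alpha> \<Longrightarrow> b \<longlonglongrightarrow> \<beta> \<Longrightarrow> w \<longlonglongrightarrow> z \<Longrightarrow> (\<lambda>n. p_fun c d (a n) (b n) (w n)) \<longlonglongrightarrow> p_fun c d \<alpha> \<beta> z"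
  unfolding p_fun_def by (intro tendsto_intros)

lemma open_contains_small_ball:
  fixes U :: "'a::metric_space set"
  assumes "open U" "z \<in> U" "e > 0"
  obtains r where "r > 0" "r \<le> e" "ball z r \<subseteq> U"
proof -
  obtain r0 where "r0 > 0" "ball z r0 \<subseteq> U" using assms(1,2) by (rule openE)
  then show ?thesis using assms(3) by (intro that[of "min r0 e"]) auto
qed

lemma ball_in_image_of_nonconstant_holomorphic:
  assumes "f holomorphic_on ball z r" and "\<not> f constant_on ball z r"
  obtains \<rho> where "\<rho> > 0" "ball (f z) \<rho> \<subseteq> f ` ball z r"
proof -
  have "r > 0" using assms(2) unfolding constant_on_def by (metis ball_eq_empty empty_iff not_less)
  have "open (f ` ball z r)"
    by (rule open_mapping_thm[OF assms(1) open_ball connected_ball open_ball order_refl assms(2)])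
  moreover have "f z \<in> f ` ball z r" using \<open>r > 0\<close> by simp
  ultimately show ?thesis using that by (meson openE)
qed

lemma q_fun_nonzero_in_ball:
  assumes "r > 0"
  shows "\<exists>w\<in>ball z r. q_fun c d w \<noteq> 0"
proof (rule ccontr)
  assume "\<not> ?thesis"
  then have "ball z r \<subseteq> {delta_p c d, delta_m c d}" using q_fun_eq_0_iff by blast
  then have "finite (ball z r)" using finite_subset by blast
  then show False using assms finite_imp_not_open[of "ball z r"] by simp
qed

lemma t_fun_zero_not_constant_on:
  assumes "r > 0" and q: "\<And>w. w \<in> ball z r \<Longrightarrow> q_fun c d w \<noteq> 0"
  shows "\<not> t_fun c d 0 \<beta> constant_on ball z r"
proof
  assume "t_fun c d 0 \<beta> constant_on ball z r"
  then obtain C where C: "\<And>w. w \<in> ball z r \<Longrightarrow> t_fun c d 0 \<beta> w = C" unfolding constant_on_def by blast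
  text \<open>On the ball, q w (t_(0,beta)(w) - C) is the quartic below, which is monic.\<close>
  define P where "P = [:- C * of_real c, \<i> * C * of_real d, C - of_real c - of_real \<beta>, \<i> * of_real d, 1:]"
  have P: "poly P w = (- C - w\<^sup>2) * q_fun c d w - of_real \<beta> * w\<^sup>2" for w
    unfolding P_def q_fun_def by (simp add: algebra_simps power2_eq_square)
  have "poly P w = q_fun c d w * (t_fun c d 0 \<beta> w - C)" if "w \<in> ball z r" for w
    using q[OF that] unfolding P t_fun_eq by (simp add: field_simps)
  then have "ball z r \<subseteq> {w. poly P w = 0}" using C by auto
  moreover have "P \<noteq> 0"
  proof
    assume "P = 0"
    then have "coeff P 4 = 0" by simp
    then show False unfolding P_def by (simp add: numeral_eq_Suc)
  qed
  then have "finite {w. poly P w = 0}" by (rule poly_roots_finite)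
  ultimately have "finite (ball z r)" using finite_subset by blast
  then show False using assms finite_imp_not_open[of "ball z r"] by simp
qed

lemma filterlim_abs_at_top_of_ereal_tendsto:
  assumes "((\<lambda>k. ereal (f k)) \<longlongrightarrow> a) F" and "a = \<infinity> \<or> a = -\<infinity>"
  shows "filterlim (\<lambda>k. \<bar>f k\<bar>) at_top F"
proof -
  have "filterlim f at_top F \<or> filterlim (\<lambda>k. - f k) at_top F"
    using assms ereal_tendsto_simps2(2,3)[of f F] by (auto simp: comp_def filterlim_uminus_at_top)
  then show ?thesis
  proof
    assume "filterlim (\<lambda>k. - f k) at_top F"
    from filterlim_compose[OF filterlim_abs_real this] show ?thesis by simp
  qed (rule filterlim_compose[OF filterlim_abs_real])
qed

lemma p_fun_roots_near_zero_of_q_fun: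
  assumes q: "q_fun c d \<delta> = 0" and "e > 0"
  obtains \<rho> where "\<rho> > 0" "\<And>R. 1 < \<rho> * \<bar>R\<bar> \<Longrightarrow> \<exists>\<omega>. dist \<omega> \<delta> < e \<and> p_fun c d R \<beta> \<omega> = 0"
proof (cases "\<beta> = 0 \<or> \<delta> = 0")
  case True
  then have "p_fun c d R \<beta> \<delta> = 0" for R unfolding p_fun_eq q by auto
  then show ?thesis using that[of 1] assms(2) by (metis dist_self zero_less_one)
next
  case False
  text \<open>The roots of p_(R,beta) are the solutions of h = 1/R, and h is an open map near its zero.\<close>
  define h where "h w = q_fun c d w / (w\<^sup>2 * (q_fun c d w + of_real \<beta>))" for w
  define U where "U = {w. w \<noteq> 0 \<and> q_fun c d w + of_real \<beta> \<noteq> 0}"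
  have "open U" unfolding U_def by (intro open_Collect_conj open_Collect_neq continuous_intros)
  moreover have "\<delta> \<in> U" unfolding U_def using False q by auto
  ultimately obtain r where r: "r > 0" "r \<le> e" "ball \<delta> r \<subseteq> U"
    using \<open>e > 0\<close> by (rule open_contains_small_ball)
  have hol: "h holomorphic_on ball \<delta> r"
    unfolding h_def by (intro holomorphic_intros) (use r(3) in \<open>force simp: U_def\<close>)
  have h\<delta>: "h \<delta> = 0" unfolding h_def q by simp
  have "\<not> h constant_on ball \<delta> r"
  proof
    assume "h constant_on ball \<delta> r"
    then have "h w = 0" if "w \<in> ball \<delta> r" for w
      using h\<delta> r(1) that unfolding constant_on_def by (metis centre_in_ball)
    then have "q_fun c d w = 0" if "w \<in> ball \<delta> r" for w
      using that r(3) unfolding h_def U_def by fastforce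
    then show False using q_fun_nonzero_in_ball[OF r(1)] by blast
  qed
  with hol obtain \<rho> where \<rho>: "\<rho> > 0" "ball 0 \<rho> \<subseteq> h ` ball \<delta> r"
    unfolding h\<delta>[symmetric] by (rule ball_in_image_of_nonconstant_holomorphic)
  show ?thesis
  proof (rule that[OF \<rho>(1)])
    fix R :: real assume R: "1 < \<rho> * \<bar>R\<bar>"
    then have "R \<noteq> 0" by auto
    with R have "norm (of_real (1 / R) :: complex) < \<rho>" by (simp add: norm_divide field_simps)
    then obtain \<omega> where \<omega>: "\<omega> \<in> ball \<delta> r" "h \<omega> = of_real (1 / R)" using \<rho>(2) by force
    have "\<omega> \<in> U" using \<omega>(1) r(3) by blast
    then have "\<omega>\<^sup>2 * (q_fun c d \<omega> + of_real \<beta>) \<noteq> 0" unfolding U_def by simp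
    then have "q_fun c d \<omega> = of_real (1 / R) * (\<omega>\<^sup>2 * (q_fun c d \<omega> + of_real \<beta>))"
      using \<omega>(2) unfolding h_def by (simp add: field_simps)
    then have "p_fun c d R \<beta> \<omega> = 0" unfolding p_fun_eq using \<open>R \<noteq> 0\<close> by (simp add: field_simps)
    moreover have "dist \<omega> \<delta> < e" using \<omega>(1) r(2) by (simp add: dist_commute)
    ultimately show "\<exists>\<omega>. dist \<omega> \<delta> < e \<and> p_fun c d R \<beta> \<omega> = 0" by blast
  qed
qed

lemma q_fun_zero_of_mem_roots_ext_infinity:
  assumes a: "a = \<infinity> \<or> a = -\<infinity>" and "z \<in> roots_ext c d a \<beta>"
  shows "q_fun c d z = 0"
proof -
  from assms(2) obtain \<alpha>s \<omega>s where lim\<alpha>: "(\<lambda>k. ereal (\<alpha>s k)) \<longlonglongrightarrow> a"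
    and p: "\<And>k. p_fun c d (\<alpha>s k) \<beta> (\<omega>s k) = 0" and lim\<omega>: "\<omega>s \<longlonglongrightarrow> z"
    using a unfolding roots_ext_def by (auto; blast)
  have abs_lim: "filterlim (\<lambda>k. \<bar>\<alpha>s k\<bar>) at_top sequentially"
    by (rule filterlim_abs_at_top_of_ereal_tendsto[OF lim\<alpha> a])
  then have "(\<lambda>k. inverse \<bar>\<alpha>s k\<bar>) \<longlonglongrightarrow> 0" by (rule tendsto_inverse_0_at_top)
  then have "(\<lambda>k. norm (complex_of_real (inverse (\<alpha>s k)))) \<longlonglongrightarrow> 0"
    by (simp add: norm_inverse)
  then have "(\<lambda>k. complex_of_real (inverse (\<alpha>s k))) \<longlonglongrightarrow> 0"
    by (rule tendsto_norm_zero_cancel)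
  then have "(\<lambda>k. of_real (inverse (\<alpha>s k)) * ((\<omega>s k)\<^sup>2 * (q_fun c d (\<omega>s k) + of_real \<beta>)))
      \<longlonglongrightarrow> 0 * (z\<^sup>2 * (q_fun c d z + of_real \<beta>))"
    by (intro tendsto_intros tendsto_q_fun lim\<omega>)
  moreover have "eventually (\<lambda>k. \<alpha>s k \<noteq> 0) sequentially"
    using abs_lim[unfolded filterlim_at_top_dense, rule_format, of 0] by (rule eventually_mono) auto
  then have "eventually (\<lambda>k. of_real (inverse (\<alpha>s k)) * ((\<omega>s k)\<^sup>2 * (q_fun c d (\<omega>s k) + of_real \<beta>))
      = q_fun c d (\<omega>s k)) sequentially"
    by eventually_elim (use p in \<open>simp add: p_fun_eq field_simps\<close>)
  ultimately have "(\<lambda>k. q_fun c d (\<omega>s k)) \<longlonglongrightarrow> 0" by (simp add: Lim_transform_eventually)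
  then show ?thesis using tendsto_q_fun[OF lim\<omega>] LIMSEQ_unique by blast
qed

lemma mem_roots_ext_infinity_of_q_fun_zero:
  assumes a: "a = \<infinity> \<or> a = -\<infinity>" and q: "q_fun c d z = 0"
  shows "z \<in> roots_ext c d a \<beta>"
proof -
  define s :: real where "s = (if a = \<infinity> then 1 else -1)"
  have "\<exists>R \<omega>. s * R \<ge> real n \<and> dist \<omega> z < inverse (real (Suc n)) \<and> p_fun c d R \<beta> \<omega> = 0" for n
  proof -
    obtain \<rho> where \<rho>: "\<rho> > 0"
      "\<And>R. 1 < \<rho> * \<bar>R\<bar> \<Longrightarrow> \<exists>\<omega>. dist \<omega> z < inverse (real (Suc n)) \<and> p_fun c d R \<beta> \<omega> = 0"
      using p_fun_roots_near_zero_of_q_fun[OF q, of "inverse (real (Suc n))"] by auto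
    define R where "R = s * (real n + 1 / \<rho> + 1)"
    have "\<bar>R\<bar> = real n + 1 / \<rho> + 1" "s * R = real n + 1 / \<rho> + 1"
      unfolding R_def s_def using \<rho>(1) by (auto simp: abs_mult)
    moreover have "\<rho> * (real n + 1 / \<rho> + 1) = \<rho> * real n + 1 + \<rho>" using \<rho>(1) by (simp add: field_simps)
    ultimately have "1 < \<rho> * \<bar>R\<bar>" "s * R \<ge> real n"
      using \<rho>(1) by (simp_all add: add_nonneg_pos)
    then show ?thesis using \<rho>(2) by blast
  qed
  then obtain R \<omega> where R: "\<And>n. s * R n \<ge> real n"
    and \<omega>: "\<And>n. dist (\<omega> n) z < inverse (real (Suc n))" and p: "\<And>n. p_fun c d (R n) \<beta> (\<omega> n) = 0"
    by metis
  have sR: "filterlim (\<lambda>n. s * R n) at_top sequentially"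
    using R by (intro filterlim_at_top_mono[OF filterlim_real_sequentially]) auto
  have "(\<lambda>n. ereal (R n)) \<longlonglongrightarrow> a"
  proof (cases "a = \<infinity>")
    case True
    then have "filterlim R at_top sequentially" using sR by (simp add: s_def)
    then show ?thesis using True ereal_tendsto_simps2(2)[of R] by (simp add: comp_def)
  next
    case False
    then have "filterlim (\<lambda>n. - R n) at_top sequentially" using sR by (simp add: s_def)
    then have "filterlim R at_bot sequentially" unfolding filterlim_uminus_at_top by simp
    then show ?thesis using False a ereal_tendsto_simps2(3)[of R] by (simp add: comp_def)
  qed
  moreover have "(\<lambda>n. dist (\<omega> n) z) \<longlonglongrightarrow> 0"
    by (rule tendsto_sandwich[OF always_eventually always_eventually tendsto_const LIMSEQ_inverse_real_of_nat])
      (simp, blast intro: less_imp_le[OF \<omega>])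
  then have "\<omega> \<longlonglongrightarrow> z" using tendsto_dist_iff by blast
  ultimately have "\<exists>\<alpha>s \<omega>s. (\<lambda>k. ereal (\<alpha>s k)) \<longlonglongrightarrow> a \<and> (\<forall>k. p_fun c d (\<alpha>s k) \<beta> (\<omega>s k) = 0) \<and> \<omega>s \<longlonglongrightarrow> z"
    using p by blast
  then show ?thesis using a unfolding roots_ext_def by (auto; blast)
qed

lemma t_fun_small_near_root:
  assumes qz: "q_fun c d z \<noteq> 0" and pz: "p_fun c d \<alpha>' \<beta> z = 0"
    and "\<bar>\<alpha> - \<alpha>'\<bar> \<le> \<epsilon>" "\<epsilon> > 0" "r > 0"
  shows "\<exists>\<omega>. dist \<omega> z < r \<and> q_fun c d \<omega> \<noteq> 0 \<and> norm (t_fun c d \<alpha> \<beta> \<omega>) < \<epsilon>"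
proof -
  define h where "h = t_fun c d 0 \<beta>"
  have "open {w. q_fun c d w \<noteq> 0}" by (intro open_Collect_neq continuous_intros)
  moreover have "z \<in> {w. q_fun c d w \<noteq> 0}" using qz by simp
  ultimately obtain r1 where r1: "r1 > 0" "r1 \<le> r" and q: "\<And>w. w \<in> ball z r1 \<Longrightarrow> q_fun c d w \<noteq> 0"
    using \<open>r > 0\<close> by (rule open_contains_small_ball) (fastforce simp: subset_iff)
  have "h holomorphic_on ball z r1"
    unfolding h_def t_fun_eq by (intro holomorphic_intros) (use q in auto)
  moreover have "\<not> h constant_on ball z r1" unfolding h_def by (rule t_fun_zero_not_constant_on[OF r1(1) q])
  ultimately obtain \<rho> where \<rho>: "\<rho> > 0" "ball (h z) \<rho> \<subseteq> h ` ball z r1"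
    by (rule ball_in_image_of_nonconstant_holomorphic)
  have "t_fun c d \<alpha>' \<beta> z = 0" using pz p_fun_eq_t_fun_mult[OF qz] qz by simp
  then have "h z = - of_real \<alpha>'"
    using t_fun_shift[of c d \<alpha>' \<beta> z] unfolding h_def by (simp add: eq_neg_iff_add_eq_0 add.commute)
  with \<rho> have \<rho>: "\<rho> > 0" "ball (- of_real \<alpha>') \<rho> \<subseteq> h ` ball z r1" by auto
  text \<open>Move from alpha' towards alpha, far enough to get strictly within epsilon of alpha but
    staying inside the image ball.\<close>
  define \<tau> where "\<tau> = min 1 (\<rho> / (2 * \<epsilon>))"
  have \<tau>: "\<tau> > 0" "\<tau> \<le> 1" "\<tau> * \<epsilon> < \<rho>"
    unfolding \<tau>_def using \<rho>(1) \<open>\<epsilon> > 0\<close> by (auto simp: field_simps min_def)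
  define w where "w = \<alpha>' + \<tau> * (\<alpha> - \<alpha>')"
  have "\<bar>w - \<alpha>'\<bar> \<le> \<tau> * \<epsilon>"
    unfolding w_def using \<tau> assms(3) by (simp add: abs_mult mult_left_mono)
  moreover have "dist (- of_real \<alpha>' :: complex) (- of_real w) = \<bar>w - \<alpha>'\<bar>"
    by (simp add: dist_minus dist_norm abs_minus_commute flip: of_real_diff)
  ultimately have "(- of_real w :: complex) \<in> ball (- of_real \<alpha>') \<rho>" using \<tau>(3) by simp
  then obtain \<omega> where \<omega>: "\<omega> \<in> ball z r1" "h \<omega> = - of_real w" using \<rho>(2) by force
  have "\<alpha> - w = (1 - \<tau>) * (\<alpha> - \<alpha>')" unfolding w_def by (simp add: algebra_simps)
  then have "\<bar>\<alpha> - w\<bar> = (1 - \<tau>) * \<bar>\<alpha> - \<alpha>'\<bar>" using \<tau> by (simp add: abs_mult)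
  also have "\<dots> \<le> (1 - \<tau>) * \<epsilon>" using \<tau> assms(3) by (simp add: mult_left_mono)
  also have "\<dots> < \<epsilon>" using \<tau> assms(4) by simp
  finally have "norm (t_fun c d \<alpha> \<beta> \<omega>) < \<epsilon>"
    using \<omega>(2) t_fun_shift[of c d \<alpha> \<beta> \<omega>] unfolding h_def by (simp flip: of_real_diff)
  moreover have "dist \<omega> z < r" using \<omega>(1) r1(2) by (simp add: dist_commute)
  ultimately show ?thesis using q[OF \<omega>(1)] by blast
qed

section \<open>Closures of real sets in the extended reals\<close>

lemma closure_subset_Inf_Sup_ereal: "closure X \<subseteq> {Inf X .. Sup X}" for X :: "ereal set"
  by (rule closure_minimal) (auto intro: Inf_lower Sup_upper)

lemma Inf_in_closure_ereal:
  fixes X :: "ereal set"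
  assumes "X \<noteq> {}"
  shows "Inf X \<in> closure X"
proof -
  have "Inf (closure X) \<in> closure X" by (rule closed_contains_Inf_cl) (use assms in auto)
  moreover have "Inf (closure X) = Inf X"
  proof (rule antisym)
    show "Inf (closure X) \<le> Inf X" by (rule Inf_superset_mono) (rule closure_subset)
    show "Inf X \<le> Inf (closure X)" using closure_subset_Inf_Sup_ereal[of X] by (auto intro!: Inf_greatest)
  qed
  ultimately show ?thesis by simp
qed

lemma Sup_in_closure_ereal:
  fixes X :: "ereal set"
  assumes "X \<noteq> {}"
  shows "Sup X \<in> closure X"
proof -
  have "Sup (closure X) \<in> closure X" by (rule closed_contains_Sup_cl) (use assms in auto)
  moreover have "Sup (closure X) = Sup X"
  proof (rule antisym)
    show "Sup X \<le> Sup (closure X)" by (rule Sup_subset_mono) (rule closure_subset)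
    show "Sup (closure X) \<le> Sup X" using closure_subset_Inf_Sup_ereal[of X] by (auto intro!: Sup_least)
  qed
  ultimately show ?thesis by simp
qed

lemma exists_close_point_in_closure_ereal:
  fixes R :: "real set"
  assumes "R \<noteq> {}" and "connected R"
    and lo: "Inf (ereal ` R) - ereal \<epsilon> \<le> ereal \<alpha>'" and hi: "ereal \<alpha>' \<le> Sup (ereal ` R) + ereal \<epsilon>"
    and "\<epsilon> \<ge> 0"
  shows "\<exists>\<alpha>. ereal \<alpha> \<in> closure (ereal ` R) \<and> \<bar>\<alpha> - \<alpha>'\<bar> \<le> \<epsilon>"
proof -
  define a where "a = Inf (ereal ` R)"
  define b where "b = Sup (ereal ` R)"
  have a: "a \<in> closure (ereal ` R)" and b: "b \<in> closure (ereal ` R)"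
    unfolding a_def b_def using assms(1) Inf_in_closure_ereal Sup_in_closure_ereal by auto
  consider "ereal \<alpha>' < a" | "b < ereal \<alpha>'" | "a \<le> ereal \<alpha>'" "ereal \<alpha>' \<le> b" by force
  then show ?thesis
  proof cases
    case 1
    then obtain a0 where "a = ereal a0" using lo unfolding a_def[symmetric] by (cases a) auto
    then show ?thesis using 1 lo a unfolding a_def[symmetric] by (intro exI[of _ a0]) auto
  next
    case 2
    then obtain b0 where "b = ereal b0" using hi unfolding b_def[symmetric] by (cases b) auto
    then show ?thesis using 2 hi b unfolding b_def[symmetric] by (intro exI[of _ b0]) auto
  next
    case 3
    have "ereal \<alpha>' \<in> closure (ereal ` R)"
    proof (cases "ereal \<alpha>' = a \<or> ereal \<alpha>' = b")
      case False
      with 3 have "a < ereal \<alpha>'" "ereal \<alpha>' < b" by auto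
      then obtain r1 r2 where "r1 \<in> R" "r1 < \<alpha>'" "r2 \<in> R" "\<alpha>' < r2"
        unfolding a_def b_def by (auto simp: Inf_less_iff less_Sup_iff)
      then have "\<alpha>' \<in> R" using connectedD_interval[OF \<open>connected R\<close>, of r1 r2 \<alpha>'] by simp
      then show ?thesis by (meson closure_subset image_eqI subsetD)
    qed (use a b in auto)
    then show ?thesis using assms(5) by (intro exI[of _ \<alpha>']) simp
  qed
qed

section \<open>A closed enclosure of the epsilon-pseudonumerical range\<close>

text \<open>Relaxing |t_(alpha,beta)| < epsilon to |p_(alpha,beta)| \<le> epsilon |q| and adding the root
  values at alpha = +/-infinity gives a closed superset of the epsilon-enclosure.\<close>
definition roots_at_infinity :: "real \<Rightarrow> real \<Rightarrow> ereal set \<Rightarrow> complex set" where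
  "roots_at_infinity c d S = (if \<infinity> \<in> S \<or> -\<infinity> \<in> S then {z. q_fun c d z = 0} else {})"

definition quasi_roots :: "real \<Rightarrow> real \<Rightarrow> ereal set \<Rightarrow> real set \<Rightarrow> real \<Rightarrow> complex set" where
  "quasi_roots c d S WB \<epsilon> = {z. \<exists>\<alpha> \<beta>. ereal \<alpha> \<in> S \<and> \<beta> \<in> WB \<and>
     norm (p_fun c d \<alpha> \<beta> z) \<le> \<epsilon> * norm (q_fun c d z)}"

lemma closed_roots_at_infinity: "closed (roots_at_infinity c d S)"
proof -
  have "closed {z. q_fun c d z = 0}" by (intro closed_Collect_eq continuous_intros)
  then show ?thesis unfolding roots_at_infinity_def by simp
qed

lemma W_Omega_eps_subset:
  assumes "\<epsilon> \<ge> 0"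
  shows "W_Omega_eps c d (S \<times> WB) \<epsilon> \<subseteq> roots_at_infinity c d S \<union> quasi_roots c d S WB \<epsilon>"
proof
  fix z assume z: "z \<in> W_Omega_eps c d (S \<times> WB) \<epsilon>"
  show "z \<in> roots_at_infinity c d S \<union> quasi_roots c d S WB \<epsilon>"
  proof (cases "z \<in> W_Omega c d (S \<times> WB)")
    case True
    then obtain a \<beta> where ab: "a \<in> S" "\<beta> \<in> WB" "z \<in> roots_ext c d a \<beta>" unfolding W_Omega_def by auto
    show ?thesis
    proof (cases a)
      case (real \<alpha>)
      then have "p_fun c d \<alpha> \<beta> z = 0" using ab(3) unfolding roots_ext_def by simp
      then have "norm (p_fun c d \<alpha> \<beta> z) \<le> \<epsilon> * norm (q_fun c d z)" using assms by simp
      then have "z \<in> quasi_roots c d S WB \<epsilon>"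
        using ab real unfolding quasi_roots_def by blast
      then show ?thesis by blast
    next
      case PInf
      then have "q_fun c d z = 0" using ab(3) q_fun_zero_of_mem_roots_ext_infinity by blast
      then show ?thesis using ab(1) PInf unfolding roots_at_infinity_def by auto
    next
      case MInf
      then have "q_fun c d z = 0" using ab(3) q_fun_zero_of_mem_roots_ext_infinity by blast
      then show ?thesis using ab(1) MInf unfolding roots_at_infinity_def by auto
    qed
  next
    case False
    then obtain \<alpha> \<beta> where ab: "z \<in> calC c d" "(ereal \<alpha>, \<beta>) \<in> S \<times> WB" "norm (t_fun c d \<alpha> \<beta> z) < \<epsilon>"
      using z unfolding W_Omega_eps_def by auto
    have q: "q_fun c d z \<noteq> 0" using ab(1) calC_iff_q_fun_nonzero by auto
    have "norm (p_fun c d \<alpha> \<beta> z) = norm (t_fun c d \<alpha> \<beta> z) * norm (q_fun c d z)"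
      using p_fun_eq_t_fun_mult[OF q] by (simp add: norm_mult)
    also have "\<dots> \<le> \<epsilon> * norm (q_fun c d z)" using ab(3) by (simp add: mult_right_mono)
    finally have "z \<in> quasi_roots c d S WB \<epsilon>" using ab(2) unfolding quasi_roots_def by blast
    then show ?thesis by blast
  qed
qed

lemma abs_le_of_p_fun_le:
  assumes p: "norm (p_fun c d \<alpha> \<beta> w) \<le> \<epsilon> * norm (q_fun c d w)" and "\<bar>\<beta>\<bar> \<le> M"
    and q: "norm (q_fun c d w) \<ge> Q" and "Q > 0" and "norm w \<le> Z" and "\<epsilon> \<ge> 0"
  shows "\<bar>\<alpha>\<bar> \<le> \<epsilon> + Z\<^sup>2 + Z\<^sup>2 * M / Q"
proof -
  let ?q = "norm (q_fun c d w)"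
  have "of_real \<alpha> * q_fun c d w = p_fun c d \<alpha> \<beta> w + w\<^sup>2 * (q_fun c d w + of_real \<beta>)"
    unfolding p_fun_eq by simp
  then have "\<bar>\<alpha>\<bar> * ?q \<le> norm (p_fun c d \<alpha> \<beta> w) + norm (w\<^sup>2 * (q_fun c d w + of_real \<beta>))"
    by (metis norm_mult norm_of_real norm_triangle_ineq)
  also have "norm (w\<^sup>2 * (q_fun c d w + of_real \<beta>)) \<le> (norm w)\<^sup>2 * (?q + \<bar>\<beta>\<bar>)"
    using norm_triangle_ineq[of "q_fun c d w" "of_real \<beta>"]
    by (simp add: norm_mult norm_power mult_left_mono)
  also have "(norm w)\<^sup>2 * (?q + \<bar>\<beta>\<bar>) \<le> Z\<^sup>2 * (?q + M)"
    using assms by (intro mult_mono power_mono) auto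
  finally have "(\<bar>\<alpha>\<bar> - \<epsilon> - Z\<^sup>2) * ?q \<le> Z\<^sup>2 * M" using p by (simp add: algebra_simps)
  moreover have "(\<bar>\<alpha>\<bar> - \<epsilon> - Z\<^sup>2) * Q \<le> (\<bar>\<alpha>\<bar> - \<epsilon> - Z\<^sup>2) * ?q \<or> (\<bar>\<alpha>\<bar> - \<epsilon> - Z\<^sup>2) * Q \<le> 0"
    using q \<open>Q > 0\<close> by (cases "\<bar>\<alpha>\<bar> - \<epsilon> - Z\<^sup>2 \<ge> 0") (auto intro: mult_left_mono mult_nonpos_nonneg)
  moreover have "0 \<le> Z\<^sup>2 * M" using \<open>\<bar>\<beta>\<bar> \<le> M\<close> by simp
  ultimately have "(\<bar>\<alpha>\<bar> - \<epsilon> - Z\<^sup>2) * Q \<le> Z\<^sup>2 * M" by linarith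
  then show ?thesis using \<open>Q > 0\<close> by (simp add: field_simps)
qed

lemma quasi_roots_bounded_limit:
  assumes "closed S" "closed WB" and WB: "\<forall>\<beta>\<in>WB. \<bar>\<beta>\<bar> \<le> M"
    and \<alpha>s: "\<And>n. ereal (\<alpha>s n) \<in> S" "\<And>n. \<bar>\<alpha>s n\<bar> \<le> C" and \<beta>s: "\<And>n. \<beta>s n \<in> WB"
    and p: "\<And>n. norm (p_fun c d (\<alpha>s n) (\<beta>s n) (zs n)) \<le> \<epsilon> * norm (q_fun c d (zs n))"
    and zs: "zs \<longlonglongrightarrow> z"
  shows "z \<in> quasi_roots c d S WB \<epsilon>"
proof -
  define f where "f n = (\<alpha>s n, \<beta>s n)" for n
  have "range f \<subseteq> cball 0 C \<times> cball 0 M" unfolding f_def using \<alpha>s(2) \<beta>s WB by auto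
  then have "bounded (range f)" using bounded_subset bounded_Times bounded_cball by metis
  then obtain l r where r: "strict_mono r" "(f \<circ> r) \<longlonglongrightarrow> l" using bounded_imp_convergent_subsequence by blast
  have l\<alpha>: "(\<lambda>n. \<alpha>s (r n)) \<longlonglongrightarrow> fst l" using tendsto_fst[OF r(2)] unfolding f_def by (simp add: o_def)
  have l\<beta>: "(\<lambda>n. \<beta>s (r n)) \<longlonglongrightarrow> snd l" using tendsto_snd[OF r(2)] unfolding f_def by (simp add: o_def)
  have lz: "(\<lambda>n. zs (r n)) \<longlonglongrightarrow> z" using LIMSEQ_subseq_LIMSEQ[OF zs r(1)] by (simp add: o_def)
  have "ereal (fst l) \<in> S" using closed_sequentially[OF \<open>closed S\<close> _ tendsto_ereal[OF l\<alpha>]] \<alpha>s(1) by blast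
  moreover have "snd l \<in> WB" using closed_sequentially[OF \<open>closed WB\<close> _ l\<beta>] \<beta>s by blast
  moreover have "norm (p_fun c d (fst l) (snd l) z) \<le> \<epsilon> * norm (q_fun c d z)"
    by (rule LIMSEQ_le[OF tendsto_norm[OF tendsto_p_fun[OF l\<alpha> l\<beta> lz]]
          tendsto_mult_left[OF tendsto_norm[OF tendsto_q_fun[OF lz]]]]) (use p in blast)
  ultimately show ?thesis unfolding quasi_roots_def by blast
qed

lemma eventually_abs_le_of_p_fun_le:
  assumes zs: "zs \<longlonglongrightarrow> z" and "q_fun c d z \<noteq> 0" and \<beta>s: "\<And>n. \<bar>\<beta>s n\<bar> \<le> M"
    and p: "\<And>n. norm (p_fun c d (\<alpha>s n) (\<beta>s n) (zs n)) \<le> \<epsilon> * norm (q_fun c d (zs n))"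
    and "\<epsilon> \<ge> 0"
  shows "\<exists>C. eventually (\<lambda>n. \<bar>\<alpha>s n\<bar> \<le> C) sequentially"
proof -
  define Q where "Q = norm (q_fun c d z) / 2"
  define Z where "Z = norm z + 1"
  have "Q > 0" unfolding Q_def using \<open>q_fun c d z \<noteq> 0\<close> by simp
  have "eventually (\<lambda>n. norm (q_fun c d (zs n)) > Q) sequentially"
    using order_tendstoD(1)[OF tendsto_norm[OF tendsto_q_fun[OF zs]], of Q] \<open>Q > 0\<close>
    unfolding Q_def by simp
  moreover have "eventually (\<lambda>n. norm (zs n) < Z) sequentially"
    using order_tendstoD(2)[OF tendsto_norm[OF zs], of Z] unfolding Z_def by simp
  ultimately have "eventually (\<lambda>n. \<bar>\<alpha>s n\<bar> \<le> \<epsilon> + Z\<^sup>2 + Z\<^sup>2 * M / Q) sequentially"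
  proof eventually_elim
    case (elim n)
    show ?case
      by (rule abs_le_of_p_fun_le[OF p[of n] \<beta>s[of n] _ \<open>Q > 0\<close> _ \<open>\<epsilon> \<ge> 0\<close>]) (use elim in auto)
  qed
  then show ?thesis by blast
qed

lemma closure_quasi_roots:
  assumes "closed S" and S: "S \<subseteq> {a..b}" "a \<in> S" "b \<in> S"
    and "closed WB" and WB: "\<forall>\<beta>\<in>WB. \<bar>\<beta>\<bar> \<le> M" and "\<epsilon> \<ge> 0"
  shows "closure (quasi_roots c d S WB \<epsilon>) \<subseteq> roots_at_infinity c d S \<union> quasi_roots c d S WB \<epsilon>"
proof
  fix z assume "z \<in> closure (quasi_roots c d S WB \<epsilon>)"
  then obtain zs where zs: "\<And>n. zs n \<in> quasi_roots c d S WB \<epsilon>" "zs \<longlonglongrightarrow> z"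
    unfolding closure_sequential by blast
  then have "\<forall>n. \<exists>\<alpha> \<beta>. ereal \<alpha> \<in> S \<and> \<beta> \<in> WB \<and> norm (p_fun c d \<alpha> \<beta> (zs n)) \<le> \<epsilon> * norm (q_fun c d (zs n))"
    unfolding quasi_roots_def by blast
  then obtain \<alpha>s \<beta>s where \<alpha>s: "\<And>n. ereal (\<alpha>s n) \<in> S" and \<beta>s: "\<And>n. \<beta>s n \<in> WB"
    and p: "\<And>n. norm (p_fun c d (\<alpha>s n) (\<beta>s n) (zs n)) \<le> \<epsilon> * norm (q_fun c d (zs n))"
    by metis
  show "z \<in> roots_at_infinity c d S \<union> quasi_roots c d S WB \<epsilon>"
  proof (cases "(\<infinity> \<in> S \<or> -\<infinity> \<in> S) \<and> q_fun c d z = 0")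
    case True
    then show ?thesis unfolding roots_at_infinity_def by auto
  next
    case False
    have "\<exists>C. eventually (\<lambda>n. \<bar>\<alpha>s n\<bar> \<le> C) sequentially"
    proof (cases "\<infinity> \<in> S \<or> -\<infinity> \<in> S")
      case True
      with False have "q_fun c d z \<noteq> 0" by blast
      then show ?thesis
        by (rule eventually_abs_le_of_p_fun_le[OF zs(2) _ _ p \<open>\<epsilon> \<ge> 0\<close>]) (use WB \<beta>s in auto)
    next
      case False
      then obtain a0 b0 where "a = ereal a0" "b = ereal b0"
        using S by (cases a; cases b) auto
      then have "a0 \<le> \<alpha>s n" "\<alpha>s n \<le> b0" for n using \<alpha>s[of n] S(1) by auto
      then have "\<bar>\<alpha>s n\<bar> \<le> \<bar>a0\<bar> + \<bar>b0\<bar>" for n by (smt (verit))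
      then show ?thesis by (intro exI always_eventually allI)
    qed
    then obtain C N where C: "\<And>n. n \<ge> N \<Longrightarrow> \<bar>\<alpha>s n\<bar> \<le> C" unfolding eventually_sequentially by blast
    have "z \<in> quasi_roots c d S WB \<epsilon>"
      by (rule quasi_roots_bounded_limit[OF \<open>closed S\<close> \<open>closed WB\<close> WB,
            where \<alpha>s = "\<lambda>n. \<alpha>s (n + N)" and \<beta>s = "\<lambda>n. \<beta>s (n + N)" and zs = "\<lambda>n. zs (n + N)" and C = C])
        (use \<alpha>s \<beta>s p C LIMSEQ_ignore_initial_segment[OF zs(2)] in auto)
    then show ?thesis by blast
  qed
qed

lemma closure_W_Omega_eps_subset:
  fixes R :: "real set"
  assumes "R \<noteq> {}" and "closed WB" "\<forall>\<beta>\<in>WB. \<bar>\<beta>\<bar> \<le> M" "\<epsilon> \<ge> 0"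
  defines "S \<equiv> closure (ereal ` R)"
  shows "closure (W_Omega_eps c d (S \<times> WB) \<epsilon>) \<subseteq> roots_at_infinity c d S \<union> quasi_roots c d S WB \<epsilon>"
proof -
  have "closure (W_Omega_eps c d (S \<times> WB) \<epsilon>)
      \<subseteq> closure (roots_at_infinity c d S \<union> quasi_roots c d S WB \<epsilon>)"
    using W_Omega_eps_subset[OF \<open>\<epsilon> \<ge> 0\<close>] by (rule closure_mono)
  also have "\<dots> = roots_at_infinity c d S \<union> closure (quasi_roots c d S WB \<epsilon>)"
    by (simp add: closure_Un closed_roots_at_infinity)
  also have "\<dots> \<subseteq> roots_at_infinity c d S \<union> quasi_roots c d S WB \<epsilon>"
    using closure_quasi_roots[of S "Inf (ereal ` R)" "Sup (ereal ` R)" WB M \<epsilon> c d] assms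
      closure_subset_Inf_Sup_ereal[of "ereal ` R"] Inf_in_closure_ereal[of "ereal ` R"]
      Sup_in_closure_ereal[of "ereal ` R"]
    by auto
  finally show ?thesis .
qed

section \<open>The imaginary axis\<close>

lemma W_OmegaI: "(a, \<beta>) \<in> \<Omega> \<Longrightarrow> z \<in> roots_ext c d a \<beta> \<Longrightarrow> z \<in> W_Omega c d \<Omega>"
  unfolding W_Omega_def by (rule UN_I) auto

lemma q_fun_imag_axis: "Re z = 0 \<Longrightarrow> q_fun c d z = of_real (c + d * Im z + (Im z)\<^sup>2)"
  by (simp add: q_fun_def complex_eq_iff power2_eq_square)

lemma p_fun_imag_axis:
  "Re z = 0 \<Longrightarrow> p_fun c d \<alpha> \<beta> z = of_real ((\<alpha> + (Im z)\<^sup>2) * (c + d * Im z + (Im z)\<^sup>2) + \<beta> * (Im z)\<^sup>2)"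
  by (simp add: p_fun_def complex_eq_iff power2_eq_square algebra_simps)

text \<open>On the imaginary axis p and q are real, so the quasi-root condition is cured by shifting
  alpha by tau = p/q with |tau| \<le> epsilon (when q = 0, also p = 0 and tau = p/0 = 0).\<close>
lemma quasi_roots_imag_axis_subset_W_Omega:
  assumes "S \<subseteq> {a..b}" and "\<epsilon> \<ge> 0" and "z \<in> quasi_roots c d S WB \<epsilon>" and "Re z = 0"
  shows "z \<in> W_Omega c d ({a - ereal \<epsilon> .. b + ereal \<epsilon>} \<times> WB)"
proof -
  obtain \<alpha> \<beta> where ab: "ereal \<alpha> \<in> S" "\<beta> \<in> WB"
    and p: "norm (p_fun c d \<alpha> \<beta> z) \<le> \<epsilon> * norm (q_fun c d z)"
    using assms(3) unfolding quasi_roots_def by blast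
  define Q where "Q = c + d * Im z + (Im z)\<^sup>2"
  define P where "P = (\<alpha> + (Im z)\<^sup>2) * (c + d * Im z + (Im z)\<^sup>2) + \<beta> * (Im z)\<^sup>2"
  have qP: "q_fun c d z = of_real Q" "p_fun c d \<alpha> \<beta> z = of_real P"
    unfolding Q_def P_def using q_fun_imag_axis p_fun_imag_axis assms(4) by auto
  define \<tau> where "\<tau> = P / Q"
  have PQ: "\<bar>P\<bar> \<le> \<epsilon> * \<bar>Q\<bar>" using p unfolding qP by simp
  then have "P = \<tau> * Q" unfolding \<tau>_def by (cases "Q = 0") auto
  then have root: "p_fun c d (\<alpha> - \<tau>) \<beta> z = 0" unfolding p_fun_shift qP by simp
  have "\<bar>\<tau>\<bar> \<le> \<epsilon>"
    using PQ assms(2) unfolding \<tau>_def by (cases "Q = 0") (auto simp: abs_divide divide_le_eq)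
  moreover have "a \<le> ereal \<alpha>" "ereal \<alpha> \<le> b" using ab(1) assms(1) by auto
  ultimately have "ereal (\<alpha> - \<tau>) \<in> {a - ereal \<epsilon> .. b + ereal \<epsilon>}" by (cases a; cases b) auto
  moreover have "z \<in> roots_ext c d (ereal (\<alpha> - \<tau>)) \<beta>" using root unfolding roots_ext_def by simp
  ultimately show ?thesis using ab(2) by (intro W_OmegaI) auto
qed

lemma roots_at_infinity_subset_W_Omega:
  assumes "S \<subseteq> {a..b}" and "\<beta> \<in> WB" and "z \<in> roots_at_infinity c d S"
  shows "z \<in> W_Omega c d ({a - ereal \<epsilon> .. b + ereal \<epsilon>} \<times> WB)"
proof -
  have q: "q_fun c d z = 0" and "\<infinity> \<in> S \<or> -\<infinity> \<in> S"
    using assms(3) unfolding roots_at_infinity_def by (auto split: if_splits)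
  then obtain e where e: "e = \<infinity> \<or> e = -\<infinity>" "e \<in> {a - ereal \<epsilon> .. b + ereal \<epsilon>}"
    using assms(1) by fastforce
  have "z \<in> roots_ext c d e \<beta>" using mem_roots_ext_infinity_of_q_fun_zero[OF e(1) q] .
  then show ?thesis using e(2) assms(2) by (intro W_OmegaI) auto
qed

lemma root_mem_closure_W_Omega_eps:
  assumes p: "p_fun c d \<alpha>' \<beta> z = 0" and "ereal \<alpha> \<in> S" "\<beta> \<in> WB"
    and "\<bar>\<alpha> - \<alpha>'\<bar> \<le> \<epsilon>" "\<epsilon> > 0"
  shows "z \<in> closure (W_Omega_eps c d (S \<times> WB) \<epsilon>)"
proof (cases "q_fun c d z = 0")
  case True
  then have "p_fun c d (\<alpha>' - (\<alpha>' - \<alpha>)) \<beta> z = 0" unfolding p_fun_shift p by simp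
  then have "z \<in> W_Omega c d (S \<times> WB)"
    using assms(2,3) by (intro W_OmegaI[of "ereal \<alpha>" \<beta>]) (auto simp: roots_ext_def)
  then show ?thesis unfolding W_Omega_eps_def using closure_subset by blast
next
  case False
  show ?thesis unfolding closure_approachable
  proof (intro allI impI)
    fix r :: real assume "r > 0"
    then obtain \<omega> where \<omega>: "dist \<omega> z < r" "q_fun c d \<omega> \<noteq> 0" "norm (t_fun c d \<alpha> \<beta> \<omega>) < \<epsilon>"
      using t_fun_small_near_root[OF False p assms(4,5)] by blast
    then have "\<omega> \<in> W_Omega_eps c d (S \<times> WB) \<epsilon>"
      unfolding W_Omega_eps_def using assms(2,3) calC_iff_q_fun_nonzero by blast
    then show "\<exists>y\<in>W_Omega_eps c d (S \<times> WB) \<epsilon>. dist y z < r" using \<omega>(1) by blast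
  qed
qed

lemma W_Omega_subset_closure_W_Omega_eps:
  fixes R :: "real set"
  assumes "R \<noteq> {}" and "connected R" and "\<epsilon> > 0"
  defines "S \<equiv> closure (ereal ` R)"
  shows "W_Omega c d ({Inf (ereal ` R) - ereal \<epsilon> .. Sup (ereal ` R) + ereal \<epsilon>} \<times> WB)
    \<subseteq> closure (W_Omega_eps c d (S \<times> WB) \<epsilon>)"
proof
  fix z assume "z \<in> W_Omega c d ({Inf (ereal ` R) - ereal \<epsilon> .. Sup (ereal ` R) + ereal \<epsilon>} \<times> WB)"
  then obtain a' \<beta> where a': "a' \<in> {Inf (ereal ` R) - ereal \<epsilon> .. Sup (ereal ` R) + ereal \<epsilon>}"
    and "\<beta> \<in> WB" and z: "z \<in> roots_ext c d a' \<beta>"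
    unfolding W_Omega_def by auto
  have Inf: "Inf (ereal ` R) \<in> S" and Sup: "Sup (ereal ` R) \<in> S"
    unfolding S_def using assms(1) Inf_in_closure_ereal Sup_in_closure_ereal by auto
  have W_Omega_S: "W_Omega c d (S \<times> WB) \<subseteq> closure (W_Omega_eps c d (S \<times> WB) \<epsilon>)"
    unfolding W_Omega_eps_def using closure_subset by blast
  show "z \<in> closure (W_Omega_eps c d (S \<times> WB) \<epsilon>)"
  proof (cases a')
    case PInf
    then have "Sup (ereal ` R) = \<infinity>" using a' by (cases "Sup (ereal ` R)") auto
    then have "z \<in> W_Omega c d (S \<times> WB)" using Sup z PInf \<open>\<beta> \<in> WB\<close> by (intro W_OmegaI) auto
    then show ?thesis using W_Omega_S by blast
  next
    case MInf
    then have "Inf (ereal ` R) = -\<infinity>" using a' by (cases "Inf (ereal ` R)") auto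
    then have "z \<in> W_Omega c d (S \<times> WB)" using Inf z MInf \<open>\<beta> \<in> WB\<close> by (intro W_OmegaI) auto
    then show ?thesis using W_Omega_S by blast
  next
    case (real \<alpha>')
    have "\<exists>\<alpha>. ereal \<alpha> \<in> S \<and> \<bar>\<alpha> - \<alpha>'\<bar> \<le> \<epsilon>"
      unfolding S_def
      by (rule exists_close_point_in_closure_ereal[OF assms(1,2)]) (use a' real \<open>\<epsilon> > 0\<close> in auto)
    moreover have "p_fun c d \<alpha>' \<beta> z = 0" using z real unfolding roots_ext_def by simp
    ultimately show ?thesis using root_mem_closure_W_Omega_eps \<open>\<beta> \<in> WB\<close> \<open>\<epsilon> > 0\<close> by blast
  qed
qed

lemma closure_W_Omega_eps_imag_axis_subset:
  fixes R :: "real set"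
  assumes "R \<noteq> {}" and "closed WB" "WB \<noteq> {}" "\<forall>\<beta>\<in>WB. \<bar>\<beta>\<bar> \<le> M" and "\<epsilon> \<ge> 0"
  shows "closure (W_Omega_eps c d (closure (ereal ` R) \<times> WB) \<epsilon>) \<inter> {z. Re z = 0}
    \<subseteq> W_Omega c d ({Inf (ereal ` R) - ereal \<epsilon> .. Sup (ereal ` R) + ereal \<epsilon>} \<times> WB)"
proof
  let ?S = "closure (ereal ` R)"
  fix z assume z: "z \<in> closure (W_Omega_eps c d (?S \<times> WB) \<epsilon>) \<inter> {z. Re z = 0}"
  have S_le: "?S \<subseteq> {Inf (ereal ` R) .. Sup (ereal ` R)}" by (rule closure_subset_Inf_Sup_ereal)
  obtain \<beta> where "\<beta> \<in> WB" using assms(3) by blast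
  from z consider "z \<in> roots_at_infinity c d ?S" | "z \<in> quasi_roots c d ?S WB \<epsilon>"
    using closure_W_Omega_eps_subset[OF assms(1,2,4,5)] by blast
  then show "z \<in> W_Omega c d ({Inf (ereal ` R) - ereal \<epsilon> .. Sup (ereal ` R) + ereal \<epsilon>} \<times> WB)"
  proof cases
    case 1
    then show ?thesis by (rule roots_at_infinity_subset_W_Omega[OF S_le \<open>\<beta> \<in> WB\<close>])
  next
    case 2
    then show ?thesis using quasi_roots_imag_axis_subset_W_Omega[OF S_le \<open>\<epsilon> \<ge> 0\<close>] z by simp
  qed
qed

theorem proposition4p7:
  fixes DA DAe :: "'h::chilbert_space set"
    and A Ae B :: "'h \<Rightarrow> 'h"
    and c d \<epsilon> :: real
  assumes "selfadjoint DA A"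
    and "selfadjoint UNIV B" and "bounded_op B" and "\<exists>x. B x \<noteq> 0"
    and "c \<ge> 0" and "d > 0" and "\<epsilon> > 0"
    and "selfadjoint DAe Ae"
    and "numrange_cl_ext DAe Ae =
           {Inf (ereal ` Re ` numrange DA A) - ereal \<epsilon> .. Sup (ereal ` Re ` numrange DA A) + ereal \<epsilon>}"
  shows "closure (W_Omega_eps c d (numrange_cl_ext DA A \<times> numrange_cl_real B) \<epsilon>) \<inter> {z. Re z = 0}
       = W_Omega c d (numrange_cl_ext DAe Ae \<times> numrange_cl_real B) \<inter> {z. Re z = 0}"
proof -
  define R where "R = Re ` numrange DA A"
  define WB where "WB = numrange_cl_real B"
  obtain x where "B x \<noteq> 0" using assms(4) by blast
  then have "x \<noteq> 0" using clinear_on_zero[of B] assms(2) unfolding selfadjoint_def by auto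
  then have "R \<noteq> {}" and "WB \<noteq> {}" unfolding R_def WB_def
    using Re_numrange_nonempty[OF assms(1)] numrange_cl_real_nonempty[OF assms(2)] by auto
  have "clinear_on DA A" using assms(1) unfolding selfadjoint_def by simp
  then have "connected R" unfolding R_def by (rule connected_Re_numrange)
  obtain M where M: "\<forall>\<beta>\<in>WB. \<bar>\<beta>\<bar> \<le> M"
    using numrange_cl_real_bounded[OF assms(3)] unfolding WB_def by blast
  have "numrange_cl_ext DA A = closure (ereal ` R)" unfolding R_def numrange_cl_ext_def ..
  moreover have "numrange_cl_ext DAe Ae = {Inf (ereal ` R) - ereal \<epsilon> .. Sup (ereal ` R) + ereal \<epsilon>}"
    unfolding R_def by (rule assms(9))
  moreover note
    closure_W_Omega_eps_imag_axis_subset[OF \<open>R \<noteq> {}\<close> closed_numrange_cl_real \<open>WB \<noteq> {}\<close>[unfolded WB_def]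
      M[unfolded WB_def], where \<epsilon> = \<epsilon> and c = c and d = d]
    W_Omega_subset_closure_W_Omega_eps[OF \<open>R \<noteq> {}\<close> \<open>connected R\<close> \<open>\<epsilon> > 0\<close>, where c = c and d = d and WB = WB]
  ultimately show ?thesis using \<open>\<epsilon> > 0\<close> unfolding WB_def by auto
qed

end
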